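(* Let $n\ge4$ and let $h=\prod_{x}L_{x,i_{n-1}}$, where $x$ runs over a set of representatives of $Q_{n-2}/\{1,-1\}$ (the factors commute and do not depend on the choice of representatives). Then $h(z)=z$ for all $z\in Q_{n-1}$ and $h(z)=-z$ for all $z\in Q_n\setminus Q_{n-1}$; i.e. $h=\prod(z,-z)$ over representatives $z$ of $(Q_n\setminus Q_{n-1})/\{1,-1\}$.
   Context: Cayley--Dickson loops: $Q_0=\{1,-1\}\subset\mathbb{R}$ with conjugation $x^*=x$. For $n\ge1$, $Q_n=\{(x,0),(x,1)\mid x\in Q_{n-1}\}$ with multiplication $(x,0)(y,0)=(xy,0)$, $(x,0)(y,1)=(yx,1)$, $(x,1)(y,0)=(xy^*,1)$, $(x,1)(y,1)=(-y^*x,0)$ and conjugation $(x,0)^*=(x^*,0)$, $(x,1)^*=(-x,1)$, where $-(x,a)=(-x,a)$. $Q_n$ is a loop with neutral element $1=(1,0,\dots,0)$; $-x=(-1)x$. $Q_{n-1}$ is identified with the subloop $\{(x,0)\}\subset Q_n$, so $Q_{n-2}\subset Q_{n-1}\subset Q_n$. Canonical generators: $i_n=(1_{Q_{n-1}},1)\in Q_n$, and $i_1,\dots,i_{n-1}$ are the canonical generators of $Q_{n-1}\subset Q_n$. $L_x(a)=xa$, $L_{x,y}=L_{yx}^{-1}L_yL_x$. *)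

theory Defs
  imports Main
begin

text \<open>An element of Q_n is encoded as a bool list of length n+1:
  Q_0 = {[False], [True]} encodes {1, -1}; the element (x,a) of Q_n (a = 0/1) is encoded
  as a # x. Thus Q_{n-1} embeds into Q_n via x \<mapsto> False # x.\<close>

definition Q :: "nat \<Rightarrow> bool list set" where
  "Q n = {xs. length xs = Suc n}"

fun cd_neg :: "bool list \<Rightarrow> bool list" where
  "cd_neg [] = []"
| "cd_neg [s] = [\<not> s]"
| "cd_neg (a # b # x) = a # cd_neg (b # x)"

fun cd_conj :: "bool list \<Rightarrow> bool list" where
  "cd_conj [] = []"
| "cd_conj [s] = [s]"
| "cd_conj (a # b # x) = (if a then a # cd_neg (b # x) else a # cd_conj (b # x))"

lemma length_cd_neg [simp]: "length (cd_neg x) = length x"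
  by (induction x rule: cd_neg.induct) auto

lemma length_cd_conj [simp]: "length (cd_conj x) = length x"
  by (induction x rule: cd_conj.induct) auto

function cd_mult :: "bool list \<Rightarrow> bool list \<Rightarrow> bool list" where
  "cd_mult [s] [t] = [s \<noteq> t]"
| "cd_mult (a # b # x) (c # d # y) =
     (if a then
        (if c then False # cd_neg (cd_mult (cd_conj (d # y)) (b # x))
         else True # cd_mult (b # x) (cd_conj (d # y)))
      else
        (if c then True # cd_mult (d # y) (b # x)
         else False # cd_mult (b # x) (d # y)))"
| "cd_mult [] _ = []"
| "cd_mult [_] [] = []"
| "cd_mult [_] (_ # _ # _) = []"
| "cd_mult (_ # _ # _) [] = []"
| "cd_mult (_ # _ # _) [_] = []"
  by pat_completeness auto
termination
  by (relation "measure (\<lambda>(x, y). length x + length y)") auto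

definition cd_one :: "nat \<Rightarrow> bool list" where
  "cd_one k = replicate (Suc k) False"

definition gen_nm1 :: "nat \<Rightarrow> bool list" where
  "gen_nm1 n = False # True # cd_one (n - 2)"

definition Lmap :: "bool list \<Rightarrow> bool list \<Rightarrow> bool list" where
  "Lmap x a = cd_mult x a"

definition Lxy :: "nat \<Rightarrow> bool list \<Rightarrow> bool list \<Rightarrow> bool list \<Rightarrow> bool list" where
  "Lxy n x y = inv_into (Q n) (Lmap (cd_mult y x)) \<circ> Lmap y \<circ> Lmap x"

definition reps_list :: "nat \<Rightarrow> bool list list \<Rightarrow> bool" where
  "reps_list k rs \<longleftrightarrow> distinct rs \<and> set rs \<subseteq> Q k \<and>
     (\<forall>x \<in> Q k. (x \<in> set rs) \<noteq> (cd_neg x \<in> set rs))"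

definition hprod :: "nat \<Rightarrow> bool list list \<Rightarrow> bool list \<Rightarrow> bool list" where
  "hprod n rs = foldr (\<lambda>x f. Lxy n (False # False # x) (gen_nm1 n) \<circ> f) rs id"

end

theory Submission
  imports Defs
begin

(*
  Write n = k + 2, so x \<in> Q_k, and write z \<in> Q_n
  as z = ((p, c), b) with p \<in> Q_k (encoded as the list b # c # p).

  1. Elementary algebra of Q_k: negation, conjugation, the identity, cancellation,
     x* = \<plusminus>x, and the sign rule xp = \<plusminus>px, where the sign is -1 exactly when x and p
     are both non-real and x \<noteq> \<plusminus>p ("anticommute").
  2. Each L_{x,i} acts on z as z or -z; it is -z iff, for b = 0, x anticommutes with p,
     and, for b = 1, x is non-real and commutes with p ("flips").  This is verified by
     the identity (ix)(\<plusminus>z) = i(xz) and left cancellation in Q_n.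
  3. Hence h(z) = (-1)^N z, where N counts the representatives x with flips x b p.
  4. Counting: N is half the number of x \<in> Q_k with flips x b p.  These are
     Q_k minus {\<plusminus>1, \<plusminus>p} or nothing (b = 0), and Q_k minus {\<plusminus>1} or {\<plusminus>p} (b = 1).
     Since |Q_k| = 2^(k+1) is divisible by 4 for k \<ge> 1, N is odd exactly when b = 1,
     i.e. when z \<notin> Q_{n-1}.
*)

text \<open>The real elements of Q_k are 1 and -1, i.e. the lists False^k s.\<close>
fun is_real :: "bool list \<Rightarrow> bool" where
  "is_real [] = False"
| "is_real [s] = True"
| "is_real (a # b # x) = (\<not> a \<and> is_real (b # x))"

text \<open>Two elements anticommute iff both are non-real and they are not \<open>\<plusminus>\<close> each other;
  this is exactly when \<open>xp = -px\<close> (lemma cd_mult_commute below).\<close>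
definition anticommute :: "bool list \<Rightarrow> bool list \<Rightarrow> bool" where
  "anticommute x p \<longleftrightarrow> \<not> is_real x \<and> \<not> is_real p \<and> x \<noteq> p \<and> x \<noteq> cd_neg p"

lemma length_SucE:
  assumes "length x = Suc k"
  obtains a x' where "x = a # x'" "length x' = k"
  using assms by (cases x) auto

lemma cd_neg_Cons [simp]: "u \<noteq> [] \<Longrightarrow> cd_neg (a # u) = a # cd_neg u"
  by (cases u) auto

lemma cd_conj_Cons [simp]:
  "u \<noteq> [] \<Longrightarrow> cd_conj (a # u) = (if a then a # cd_neg u else a # cd_conj u)"
  by (cases u) auto

lemma is_real_Cons [simp]: "u \<noteq> [] \<Longrightarrow> is_real (a # u) = (\<not> a \<and> is_real u)"
  by (cases u) auto

lemma cd_mult_Cons [simp]: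
  "u \<noteq> [] \<Longrightarrow> v \<noteq> [] \<Longrightarrow> cd_mult (a # u) (c # v) =
     (if a then
        (if c then False # cd_neg (cd_mult (cd_conj v) u) else True # cd_mult u (cd_conj v))
      else
        (if c then True # cd_mult v u else False # cd_mult u v))"
  by (cases u; cases v) auto

lemma length_cd_mult [simp]: "length x = length y \<Longrightarrow> length (cd_mult x y) = length x"
  by (induction x y rule: cd_mult.induct) auto

lemma cd_mult_ne [simp]: "length x = length y \<Longrightarrow> x \<noteq> [] \<Longrightarrow> cd_mult x y \<noteq> []"
  by (metis length_0_conv length_cd_mult)

lemma cd_neg_ne [simp]: "x \<noteq> [] \<Longrightarrow> cd_neg x \<noteq> []"
  by (metis length_0_conv length_cd_neg)

lemma cd_conj_ne [simp]: "x \<noteq> [] \<Longrightarrow> cd_conj x \<noteq> []"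
  by (metis length_0_conv length_cd_conj)

lemma cd_neg_neg [simp]: "cd_neg (cd_neg x) = x"
  by (induction x rule: cd_neg.induct) auto

lemma cd_neg_neq [simp]: "x \<noteq> [] \<Longrightarrow> cd_neg x \<noteq> x" "x \<noteq> [] \<Longrightarrow> x \<noteq> cd_neg x"
  by (induction x rule: cd_neg.induct) auto

lemma cd_neg_inj [simp]: "(cd_neg x = cd_neg y) = (x = y)"
  by (metis cd_neg_neg)

lemma cd_conj_neg: "cd_conj (cd_neg x) = cd_neg (cd_conj x)"
  by (induction x rule: cd_conj.induct) auto

lemma cd_conj_conj [simp]: "cd_conj (cd_conj x) = x"
  by (induction x rule: cd_conj.induct) auto

lemma cd_conj_inj [simp]: "(cd_conj x = cd_conj y) = (x = y)"
  by (metis cd_conj_conj)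

lemma is_real_neg [simp]: "is_real (cd_neg x) = is_real x"
  by (induction x rule: cd_neg.induct) auto

lemma anticommute_neg [simp]:
  "anticommute x (cd_neg p) = anticommute x p" "anticommute (cd_neg x) p = anticommute x p"
  by (auto simp: anticommute_def)

lemma cd_conj_real: "length x = Suc k \<Longrightarrow> cd_conj x = (if is_real x then x else cd_neg x)"
proof (induction k arbitrary: x)
  case 0 then show ?case by (auto simp: length_Suc_conv)
next
  case (Suc k)
  obtain a x' where x: "x = a # x'" "length x' = Suc k" using Suc.prems by (rule length_SucE)
  then have "x' \<noteq> []" by auto
  then show ?case using Suc.IH[OF x(2)] x by auto
qed

lemma cd_mult_neg:
  "length x = Suc k \<Longrightarrow> length y = Suc k \<Longrightarrow>
   cd_mult x (cd_neg y) = cd_neg (cd_mult x y) \<and> cd_mult (cd_neg x) y = cd_neg (cd_mult x y)"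
proof (induction k arbitrary: x y)
  case 0 then show ?case by (auto simp: length_Suc_conv)
next
  case (Suc k)
  obtain a x' where x: "x = a # x'" "length x' = Suc k" using Suc.prems(1) by (rule length_SucE)
  obtain c y' where y: "y = c # y'" "length y' = Suc k" using Suc.prems(2) by (rule length_SucE)
  have "x' \<noteq> []" "y' \<noteq> []" using x(2) y(2) by auto
  then show ?case using x y Suc.IH[of x' y'] Suc.IH[of y' x'] Suc.IH[of x' "cd_conj y'"]
      Suc.IH[of "cd_conj y'" x']
    by (auto simp: cd_conj_neg)
qed

lemma cd_mult_neg_right [simp]:
  assumes "length x = length y" "x \<noteq> []"
  shows "cd_mult x (cd_neg y) = cd_neg (cd_mult x y)"
proof -
  obtain k where "length x = Suc k" using assms(2) by (cases x) auto
  then show ?thesis using cd_mult_neg[of x k y] assms(1) by simp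
qed

lemma cd_mult_neg_left [simp]:
  assumes "length x = length y" "x \<noteq> []"
  shows "cd_mult (cd_neg x) y = cd_neg (cd_mult x y)"
proof -
  obtain k where "length x = Suc k" using assms(2) by (cases x) auto
  then show ?thesis using cd_mult_neg[of x k y] assms(1) by simp
qed

lemma cd_one_Suc: "cd_one (Suc k) = False # cd_one k"
  by (simp add: cd_one_def)

lemma length_cd_one [simp]: "length (cd_one k) = Suc k"
  by (simp add: cd_one_def)

lemma cd_one_ne [simp]: "cd_one k \<noteq> []"
  by (simp add: cd_one_def)

lemma is_real_cd_one [simp]: "is_real (cd_one k)"
  by (induction k) (auto simp: cd_one_Suc cd_one_def)

lemma cd_conj_one [simp]: "cd_conj (cd_one k) = cd_one k"
  using cd_conj_real[of "cd_one k" k] by simp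

lemma cd_mult_one:
  "length y = Suc k \<Longrightarrow> cd_mult (cd_one k) y = y \<and> cd_mult y (cd_one k) = y"
proof (induction k arbitrary: y)
  case 0 then show ?case by (auto simp: length_Suc_conv cd_one_def)
next
  case (Suc k)
  obtain c y' where y: "y = c # y'" "length y' = Suc k" using Suc.prems by (rule length_SucE)
  then have "y' \<noteq> []" by auto
  then show ?case using y Suc.IH[of y'] by (auto simp: cd_one_Suc)
qed

lemma cd_conj_mult:
  "length x = Suc k \<Longrightarrow> length y = Suc k \<Longrightarrow>
   cd_conj (cd_mult x y) = cd_mult (cd_conj y) (cd_conj x)"
proof (induction k arbitrary: x y)
  case 0 then show ?case by (auto simp: length_Suc_conv)
next
  case (Suc k)
  obtain a x' where x: "x = a # x'" "length x' = Suc k" using Suc.prems(1) by (rule length_SucE)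
  obtain c y' where y: "y = c # y'" "length y' = Suc k" using Suc.prems(2) by (rule length_SucE)
  have "x' \<noteq> []" "y' \<noteq> []" using x(2) y(2) by auto
  then show ?case using x y Suc.IH[of x' y'] Suc.IH[of y' x'] Suc.IH[of x' "cd_conj y'"]
      Suc.IH[of "cd_conj y'" x']
    by (auto simp: cd_conj_neg)
qed

lemma cd_mult_cancel:
  "length x = Suc k \<Longrightarrow> length y = Suc k \<Longrightarrow> length y' = Suc k \<Longrightarrow>
   (cd_mult x y = cd_mult x y' \<longrightarrow> y = y') \<and> (cd_mult y x = cd_mult y' x \<longrightarrow> y = y')"
proof (induction k arbitrary: x y y')
  case 0 then show ?case by (auto simp: length_Suc_conv)
next
  case (Suc k)
  obtain a x1 where x: "x = a # x1" "length x1 = Suc k" using Suc.prems(1) by (rule length_SucE)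
  obtain c y1 where y: "y = c # y1" "length y1 = Suc k" using Suc.prems(2) by (rule length_SucE)
  obtain d y2 where y': "y' = d # y2" "length y2 = Suc k" using Suc.prems(3) by (rule length_SucE)
  have "x1 \<noteq> []" "y1 \<noteq> []" "y2 \<noteq> []" using x(2) y(2) y'(2) by auto
  then show ?case using x y y' Suc.IH[of x1 y1 y2] Suc.IH[of x1 "cd_conj y1" "cd_conj y2"]
      Suc.IH[of "cd_conj x1" y1 y2]
    by (auto split: if_splits)
qed

lemma is_real_iff: "length x = Suc k \<Longrightarrow> is_real x \<longleftrightarrow> x = cd_one k \<or> x = cd_neg (cd_one k)"
proof (induction k arbitrary: x)
  case 0 then show ?case by (auto simp: length_Suc_conv cd_one_def)
next
  case (Suc k)
  obtain a x' where x: "x = a # x'" "length x' = Suc k" using Suc.prems by (rule length_SucE)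
  then have "x' \<noteq> []" by auto
  then show ?case using Suc.IH[OF x(2)] x by (auto simp: cd_one_Suc)
qed

lemma cd_mult_commute:
  "length x = Suc k \<Longrightarrow> length y = Suc k \<Longrightarrow>
   cd_mult x y = (if anticommute x y then cd_neg (cd_mult y x) else cd_mult y x)"
proof (induction k arbitrary: x y)
  case 0 then show ?case by (auto simp: length_Suc_conv anticommute_def)
next
  case (Suc k)
  obtain a x' where x: "x = a # x'" "length x' = Suc k" using Suc.prems(1) by (rule length_SucE)
  obtain c y' where y: "y = c # y'" "length y' = Suc k" using Suc.prems(2) by (rule length_SucE)
  have ne: "x' \<noteq> []" "y' \<noteq> []" using x(2) y(2) by auto
  have reals_eq: "x' = y' \<or> x' = cd_neg y'" if "is_real x'" "is_real y'"
    using that is_real_iff[OF x(2)] is_real_iff[OF y(2)] by auto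
  have "cd_neg (cd_mult y' x') \<noteq> cd_mult y' x'" using ne x y by simp
  then show ?case
    using x y ne cd_conj_real[OF x(2)] cd_conj_real[OF y(2)] Suc.IH[OF x(2) y(2)] reals_eq
    by (cases a; cases c) (auto simp: anticommute_def split: if_splits)
qed

text \<open>To compute \<open>L_{x,y}(z) = L_{yx}^{-1}(y(xz))\<close> it suffices to exhibit the preimage,
  because left translations are injective on Q_n.\<close>
lemma Lxy_eqI:
  assumes "x \<in> Q n" "y \<in> Q n" "v \<in> Q n"
    and "cd_mult (cd_mult y x) v = cd_mult y (cd_mult x z)"
  shows "Lxy n x y z = v"
proof -
  have yx: "length (cd_mult y x) = Suc n" using assms(1,2) by (simp add: Q_def)
  have "inj_on (Lmap (cd_mult y x)) (Q n)"
    using cd_mult_cancel[OF yx] by (auto intro!: inj_onI simp: Q_def Lmap_def)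
  then show ?thesis
    using inv_into_f_f[of "Lmap (cd_mult y x)" "Q n" v] assms(3,4) by (simp add: Lxy_def Lmap_def)
qed

text \<open>For z = b # c # p, the condition under which \<open>L_{x,i}\<close> negates z.\<close>
definition flips :: "bool list \<Rightarrow> bool \<Rightarrow> bool list \<Rightarrow> bool" where
  "flips x b p = (if b then \<not> is_real x \<and> \<not> anticommute x p else anticommute x p)"

lemma flips_neg [simp]: "flips x b (cd_neg p) = flips x b p"
  by (simp add: flips_def)

lemma gen_times_embedded:
  "length x = Suc k \<Longrightarrow> cd_mult (gen_nm1 (Suc (Suc k))) (False # False # x) = False # True # cd_conj x"
  using cd_mult_one[of "cd_conj x" k] by (cases x) (auto simp: gen_nm1_def)

text \<open>The key computation: \<open>(ix)(\<plusminus>z) = i(xz)\<close> with the sign given by flips; in each of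
  the four blocks of z it is an instance of the sign rule and \<open>(xy)* = y*x*\<close>.\<close>
lemma translation_sign_identity:
  assumes x: "length x = Suc k" and p: "length p = Suc k"
  shows "cd_mult (False # True # cd_conj x) (if flips x b p then cd_neg (b # c # p) else b # c # p)
       = cd_mult (gen_nm1 (Suc (Suc k))) (cd_mult (False # False # x) (b # c # p))"
proof -
  have ne: "x \<noteq> []" "p \<noteq> []" using x p by auto
  show ?thesis
    using ne x p cd_mult_commute[OF x p] cd_conj_real[OF x] cd_conj_real[OF p] cd_conj_mult[OF x p]
      cd_conj_mult[OF p x] cd_mult_one[of "cd_mult p x" k] cd_mult_one[of "cd_mult p (cd_conj x)" k]
      cd_mult_one[of "cd_conj (cd_mult p x)" k] cd_mult_one[of "cd_conj (cd_mult x p)" k]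
    by (cases b; cases c) (auto simp: gen_nm1_def flips_def anticommute_def cd_conj_neg split: if_splits)
qed

lemma Lxy_gen_embedded:
  assumes x: "length x = Suc k" and p: "length p = Suc k"
  shows "Lxy (Suc (Suc k)) (False # False # x) (gen_nm1 (Suc (Suc k))) (b # c # p)
       = (if flips x b p then cd_neg (b # c # p) else b # c # p)"
proof (rule Lxy_eqI)
  show "False # False # x \<in> Q (Suc (Suc k))" "gen_nm1 (Suc (Suc k)) \<in> Q (Suc (Suc k))"
    using x by (simp_all add: Q_def gen_nm1_def)
  show "(if flips x b p then cd_neg (b # c # p) else b # c # p) \<in> Q (Suc (Suc k))"
    using p by (simp add: Q_def)
  show "cd_mult (cd_mult (gen_nm1 (Suc (Suc k))) (False # False # x))
          (if flips x b p then cd_neg (b # c # p) else b # c # p)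
      = cd_mult (gen_nm1 (Suc (Suc k))) (cd_mult (False # False # x) (b # c # p))"
    using translation_sign_identity[OF x p] by (simp add: gen_times_embedded[OF x])
qed

lemma hprod_sign:
  assumes "set rs \<subseteq> Q k" "length p = Suc k"
  shows "hprod (Suc (Suc k)) rs (b # c # p)
       = (if odd (length (filter (\<lambda>x. flips x b p) rs)) then cd_neg (b # c # p) else b # c # p)"
  using assms(1)
proof (induction rs)
  case Nil then show ?case by (simp add: hprod_def)
next
  case (Cons x rs)
  have x: "length x = Suc k" using Cons.prems by (simp add: Q_def)
  have ne: "p \<noteq> []" using assms(2) by auto
  have "hprod (Suc (Suc k)) (x # rs) (b # c # p)
      = Lxy (Suc (Suc k)) (False # False # x) (gen_nm1 (Suc (Suc k))) (hprod (Suc (Suc k)) rs (b # c # p))"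
    by (simp add: hprod_def)
  then show ?case
    using Cons Lxy_gen_embedded[OF x assms(2), of b c] Lxy_gen_embedded[of x k "cd_neg p" b c] x assms(2) ne
    by auto
qed

lemma card_Q: "card (Q k) = 2 ^ Suc k"
proof -
  have "Q k = {xs. set xs \<subseteq> UNIV \<and> length xs = Suc k}" by (auto simp: Q_def)
  then show ?thesis using card_lists_length_eq[of "UNIV :: bool set" "Suc k"] by simp
qed

lemma real_elements_Q: "{x \<in> Q k. is_real x} = {cd_one k, cd_neg (cd_one k)}"
  using is_real_iff[of _ k] by (auto simp: Q_def)

lemma card_pair_neg: "x \<noteq> [] \<Longrightarrow> card {x, cd_neg x} = 2"
  by (simp add: card_insert_if)

text \<open>A non-real p anticommutes with every x except \<open>\<plusminus>1, \<plusminus>p\<close>; a real p with none.\<close>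
lemma card_anticommuting:
  assumes p: "length p = Suc k"
  shows "card {x \<in> Q k. anticommute x p} = (if is_real p then 0 else 2 ^ Suc k - 4)"
proof (cases "is_real p")
  case True then show ?thesis by (simp add: anticommute_def)
next
  case False
  let ?E = "{cd_one k, cd_neg (cd_one k), p, cd_neg p}"
  have "p \<noteq> []" using p by auto
  have "{x \<in> Q k. anticommute x p} = Q k - ?E"
    using False real_elements_Q[of k] by (auto simp: anticommute_def)
  moreover have "card ?E = 4" "?E \<subseteq> Q k"
    using False p \<open>p \<noteq> []\<close> by (auto simp: card_insert_if Q_def)
  ultimately show ?thesis
    using False card_Diff_subset[of ?E "Q k"] card_Q[of k] by (simp add: finite_subset)
qed

text \<open>The non-real elements commuting with p: all of them if p is real, else \<open>\<plusminus>p\<close>.\<close>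
lemma card_commuting_nonreal:
  assumes p: "length p = Suc k"
  shows "card {x \<in> Q k. \<not> is_real x \<and> \<not> anticommute x p} = (if is_real p then 2 ^ Suc k - 2 else 2)"
proof (cases "is_real p")
  case True
  let ?E = "{cd_one k, cd_neg (cd_one k)}"
  have "{x \<in> Q k. \<not> is_real x \<and> \<not> anticommute x p} = Q k - ?E"
    using True real_elements_Q[of k] by (auto simp: anticommute_def)
  moreover have "card ?E = 2" "?E \<subseteq> Q k" by (auto simp: card_pair_neg Q_def)
  ultimately show ?thesis
    using True card_Diff_subset[of ?E "Q k"] card_Q[of k] by (simp add: finite_subset)
next
  case False
  have "{x \<in> Q k. \<not> is_real x \<and> \<not> anticommute x p} = {p, cd_neg p}"
    using False p by (auto simp: anticommute_def Q_def)
  moreover have "p \<noteq> []" using p by auto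
  ultimately show ?thesis using False by (simp add: card_pair_neg)
qed

lemma reps_filter_card:
  assumes reps: "reps_list k rs" and P_neg: "\<And>y. P (cd_neg y) = P y"
  shows "2 * length (filter P rs) = card {x \<in> Q k. P x}"
proof -
  define S where "S = {x \<in> set rs. P x}"
  have dist: "distinct rs" and sub: "set rs \<subseteq> Q k"
    and choice: "\<And>x. x \<in> Q k \<Longrightarrow> (x \<in> set rs) \<noteq> (cd_neg x \<in> set rs)"
    using reps by (auto simp: reps_list_def)
  have len: "length (filter P rs) = card S"
    using distinct_card[of "filter P rs"] dist by (simp add: S_def)
  have split: "{x \<in> Q k. P x} = S \<union> cd_neg ` S"
  proof
    show "{x \<in> Q k. P x} \<subseteq> S \<union> cd_neg ` S"
    proof
      fix x assume x: "x \<in> {x \<in> Q k. P x}"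
      show "x \<in> S \<union> cd_neg ` S"
      proof (cases "x \<in> set rs")
        case True then show ?thesis using x by (simp add: S_def)
      next
        case False
        then have "cd_neg x \<in> S" using choice x P_neg by (auto simp: S_def)
        then show ?thesis by (metis UnI2 image_eqI cd_neg_neg)
      qed
    qed
    show "S \<union> cd_neg ` S \<subseteq> {x \<in> Q k. P x}"
      using sub P_neg by (auto simp: S_def Q_def)
  qed
  have disjoint: "S \<inter> cd_neg ` S = {}"
    using choice sub by (auto simp: S_def)
  have "card (cd_neg ` S) = card S"
    by (rule card_image) (auto simp: inj_on_def)
  then show ?thesis
    using len split disjoint card_Un_disjoint[of S "cd_neg ` S"] by (simp add: S_def)
qed

lemma reps_flips_parity:
  assumes reps: "reps_list k rs" and k: "1 \<le> k" and p: "length p = Suc k"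
  shows "odd (length (filter (\<lambda>x. flips x b p) rs)) \<longleftrightarrow> b"
proof -
  let ?N = "length (filter (\<lambda>x. flips x b p) rs)"
  have count: "2 * ?N = card {x \<in> Q k. flips x b p}"
    by (rule reps_filter_card[OF reps]) (simp add: flips_def)
  obtain j where j: "k = Suc j" using k by (cases k) auto
  define m :: nat where "m = 2 ^ j"
  have m: "2 ^ Suc k = 4 * m" "1 \<le> m" by (simp_all add: j m_def)
  show ?thesis
  proof (cases b)
    case True
    then have "2 * ?N = (if is_real p then 4 * m - 2 else 2)"
      using count card_commuting_nonreal[OF p] m(1) by (simp add: flips_def)
    then have "?N = (if is_real p then 2 * m - 1 else 1)" by auto
    then show ?thesis using True m(2) by (simp split: if_splits; presburger)
  next
    case False
    then have "2 * ?N = (if is_real p then 0 else 4 * m - 4)"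
      using count card_anticommuting[OF p] m(1) by (simp add: flips_def)
    then have "?N = (if is_real p then 0 else 2 * (m - 1))" by auto
    then show ?thesis using False by simp
  qed
qed

theorem mainTheorem15:
  fixes n :: nat and rs :: "bool list list"
  assumes "n \<ge> 4" and "reps_list (n - 2) rs"
  shows "\<forall>z \<in> Q n. hprod n rs z = (if z \<in> (\<lambda>x. False # x) ` Q (n - 1) then z else cd_neg z)"
proof
  fix z assume z: "z \<in> Q n"
  obtain k where n: "n = Suc (Suc k)" and k: "1 \<le> k"
    using assms(1) by (intro that[of "n - 2"]) auto
  have reps: "reps_list k rs" using assms(2) n by simp
  then have sub: "set rs \<subseteq> Q k" by (simp add: reps_list_def)
  obtain b c p where bcp: "z = b # c # p" and p: "length p = Suc k"
    using z n by (auto simp: Q_def length_Suc_conv)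
  have "z \<in> (\<lambda>x. False # x) ` Q (n - 1) \<longleftrightarrow> \<not> b"
    using bcp p n by (auto simp: Q_def)
  then show "hprod n rs z = (if z \<in> (\<lambda>x. False # x) ` Q (n - 1) then z else cd_neg z)"
    using hprod_sign[OF sub p, of b c] reps_flips_parity[OF reps k p, of b] n bcp by simp
qed

end
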